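(* Let $G$ be a Hausdorff topological group, $(g_n)_{n\in\mathbb N}$ a sequence of pairwise distinct elements of $G$, and $A=\{g_1,g_2,\dots\}$. Consider: (ap1) $A$ is absolutely productive in $G$; (ap2) for every injection $\sigma:\mathbb N\to\mathbb N$ the sequence $(g_{\sigma(n)})_n$ is hyper-multipliable in $G$; (ap3) for every bijection $\sigma:\mathbb N\to\mathbb N$ the sequence $(g_{\sigma(n)})_n$ is hyper-multipliable in $G$; (ap4) $(g_n)_n$ is hyper-multipliable in $G$. Then (a) (ap1), (ap2), (ap3) are equivalent and imply (ap4); (b) if $G$ is abelian, then (ap1)–(ap4) are all equivalent.
   Context: $\prod_{k=1}^n a_k=a_1\cdots a_n$. A sequence $(g_n)$ in $G$ is hyper-multipliable if for every integer sequence $(m_n)$ the sequence $\left(\prod_{k=1}^n g_k^{m_k}\right)_n$ converges in $G$. A subset $A\subset G$ is absolutely productive in $G$ if every sequence of pairwise distinct elements of $A$ is hyper-multipliable in $G$. *)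

theory Defs
  imports "HOL-Analysis.Analysis"
begin

text \<open>Topological groups are written additively (class topological_group_add,
  built on the possibly non-commutative class group_add). The ordered product
  a_1 ... a_n becomes the ordered sum a_0 + ... + a_(n-1) (sequences indexed from 0),
  and g^m (m integer) becomes the integer multiple zmult m g.\<close>

definition zmult :: "int \<Rightarrow> 'a::group_add \<Rightarrow> 'a" where
  "zmult m g = (if 0 \<le> m then ((\<lambda>x. x + g) ^^ nat m) 0
                else - (((\<lambda>x. x + g) ^^ nat (- m)) 0))"

primrec oprod :: "(nat \<Rightarrow> 'a::monoid_add) \<Rightarrow> nat \<Rightarrow> 'a" where
  "oprod f 0 = 0"
| "oprod f (Suc n) = oprod f n + f n"

definition hyper_multipliable :: "(nat \<Rightarrow> 'a::{topological_group_add}) \<Rightarrow> bool" where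
  "hyper_multipliable g \<longleftrightarrow>
     (\<forall>m :: nat \<Rightarrow> int. convergent (\<lambda>n. oprod (\<lambda>k. zmult (m k) (g k)) n))"

definition absolutely_productive :: "'a::{topological_group_add} set \<Rightarrow> bool" where
  "absolutely_productive A \<longleftrightarrow>
     (\<forall>h :: nat \<Rightarrow> 'a. inj h \<and> range h \<subseteq> A \<longrightarrow> hyper_multipliable h)"

end

theory Submission
  imports Defs
begin

(* Every injection of the naturals is a strictly increasing map followed by a bijection,
   and hyper-multipliability passes to subsequences (the omitted indices get exponent 0);
   hence (ap1)-(ap3) are equivalent, and (ap4) is the case of the identity.
   For abelian G, hyper-multipliability makes every series of the terms m_k g_k converge
   along every subset of indices. A block argument turns this into a Cauchy condition:
   finite sums over indices beyond some N lie in a given neighbourhood of 0. Then the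
   series may be reordered along any injection, because a partial sum of the reordered
   series is a partial sum of the original one plus a finite sum over large indices. *)

lemma zmult_0 [simp]: "zmult 0 g = 0"
  by (simp add: zmult_def)

lemma oprod_eq_if_zero_between:
  assumes "a \<le> b" and "\<And>j. a \<le> j \<Longrightarrow> j < b \<Longrightarrow> f j = 0"
  shows "oprod f b = oprod f a"
  using assms by (induction b rule: dec_induct) auto

lemma oprod_comp_strict_mono:
  assumes r: "strict_mono r" and zero: "\<And>j. j \<notin> range r \<Longrightarrow> f j = 0"
  shows "oprod f (r n) = oprod (f \<circ> r) n"
proof (induction n)
  case 0
  have "j \<notin> range r" if "j < r 0" for j
    using that r by (auto simp: strict_mono_less)
  then have "oprod f (r 0) = oprod f 0"
    by (intro oprod_eq_if_zero_between zero) auto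
  then show ?case by simp
next
  case (Suc n)
  have "j \<notin> range r" if "r n < j" "j < r (Suc n)" for j
    using that r by (auto simp: strict_mono_less)
  then have "oprod f (r (Suc n)) = oprod f (Suc (r n))"
    using r by (intro oprod_eq_if_zero_between zero) (auto simp: strict_mono_Suc_iff Suc_le_eq)
  with Suc show ?case by simp
qed

lemma hyper_multipliable_comp_strict_mono:
  assumes g: "hyper_multipliable g" and r: "strict_mono r"
  shows "hyper_multipliable (g \<circ> r)"
  unfolding hyper_multipliable_def
proof
  fix m :: "nat \<Rightarrow> int"
  define m' where "m' j = (if j \<in> range r then m (inv r j) else 0)" for j
  define f where "f j = zmult (m' j) (g j)" for j
  have zero: "f j = 0" if "j \<notin> range r" for j
    using that by (simp add: f_def m'_def)
  have "inj r"
    using r by (rule strict_mono_imp_inj_on)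
  then have fr: "f \<circ> r = (\<lambda>k. zmult (m k) ((g \<circ> r) k))"
    by (auto simp: f_def m'_def)
  obtain L where "oprod f \<longlonglongrightarrow> L"
    using g by (auto simp: hyper_multipliable_def convergent_def f_def [abs_def])
  then have "(oprod f \<circ> r) \<longlonglongrightarrow> L"
    using r by (rule LIMSEQ_subseq_LIMSEQ)
  moreover have "oprod f \<circ> r = oprod (f \<circ> r)"
    using oprod_comp_strict_mono [OF r zero] by (simp add: fun_eq_iff)
  ultimately have "oprod (f \<circ> r) \<longlonglongrightarrow> L"
    by simp
  then show "convergent (oprod (\<lambda>k. zmult (m k) ((g \<circ> r) k)))"
    unfolding fr by (rule convergentI)
qed

lemma strict_mono_with_equipotent_complement:
  fixes D :: "nat set"
  obtains r :: "nat \<Rightarrow> nat" and e where "strict_mono r" and "bij_betw e (- range r) D"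
proof (cases "finite D")
  case True
  then obtain e where "bij_betw e {..<card D} D"
    by (metis ex_bij_betw_nat_finite atLeast0LessThan)
  moreover have "- range (\<lambda>n. n + card D) = {..<card D}"
    by (auto simp: image_iff) presburger
  ultimately show ?thesis
    by (intro that[of "\<lambda>n. n + card D" e]) (auto simp: strict_mono_def)
next
  case False
  define odds where "odds = range (\<lambda>n :: nat. 2 * n + 1)"
  have "range (\<lambda>n :: nat. 2 * n) = {n. even n}" and "odds = {n. odd n}"
    unfolding odds_def by (auto elim: evenE oddE)
  then have odds: "- range (\<lambda>n. 2 * n) = odds"
    by auto
  have "infinite odds"
    unfolding odds_def by (rule range_inj_infinite) (simp add: inj_def)
  then have "bij_betw (from_nat_into D \<circ> to_nat_on odds) odds D"
    using False by (intro bij_betw_trans [where B = UNIV] to_nat_on_infinite bij_betw_from_nat_into) auto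
  with odds show ?thesis
    by (intro that[of "\<lambda>n. 2 * n"]) (auto simp: strict_mono_def)
qed

lemma inj_factors_through_bij:
  fixes \<sigma> :: "nat \<Rightarrow> nat"
  assumes \<sigma>: "inj \<sigma>"
  obtains \<tau> r :: "nat \<Rightarrow> nat" where "bij \<tau>" and "strict_mono r" and "\<sigma> = \<tau> \<circ> r"
proof -
  obtain r e :: "nat \<Rightarrow> nat" where r: "strict_mono r" and e: "bij_betw e (- range r) (- range \<sigma>)"
    by (rule strict_mono_with_equipotent_complement)
  have "inj r" using r by (rule strict_mono_imp_inj_on)
  then have on_range: "bij_betw (\<sigma> \<circ> inv r) (range r) (range \<sigma>)"
    using \<sigma> by (intro bij_betw_trans [where B = UNIV] bij_betw_inv_into inj_on_imp_bij_betw)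
  define \<tau> where "\<tau> n = (if n \<in> range r then (\<sigma> \<circ> inv r) n else e n)" for n
  have "bij_betw \<tau> (range r \<union> - range r) (range \<sigma> \<union> - range \<sigma>)"
    unfolding \<tau>_def using on_range e by (rule bij_betw_disjoint_Un) auto
  then have "bij \<tau>"
    by simp
  moreover note r
  moreover have "\<sigma> = \<tau> \<circ> r"
    using \<open>inj r\<close> by (auto simp: \<tau>_def)
  ultimately show ?thesis
    by (rule that)
qed

lemma absolutely_productive_range_iff:
  fixes g :: "nat \<Rightarrow> 'a::topological_group_add"
  assumes g: "inj g"
  shows "absolutely_productive (range g) \<longleftrightarrow> (\<forall>\<sigma>. inj \<sigma> \<longrightarrow> hyper_multipliable (g \<circ> \<sigma>))"
proof
  assume ap: "absolutely_productive (range g)"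
  show "\<forall>\<sigma>. inj \<sigma> \<longrightarrow> hyper_multipliable (g \<circ> \<sigma>)"
  proof (intro allI impI)
    fix \<sigma> :: "nat \<Rightarrow> nat" assume "inj \<sigma>"
    with g have "inj (g \<circ> \<sigma>)"
      by (rule inj_compose)
    moreover have "range (g \<circ> \<sigma>) \<subseteq> range g"
      by auto
    ultimately show "hyper_multipliable (g \<circ> \<sigma>)"
      using ap by (simp add: absolutely_productive_def)
  qed
next
  assume hm: "\<forall>\<sigma>. inj \<sigma> \<longrightarrow> hyper_multipliable (g \<circ> \<sigma>)"
  show "absolutely_productive (range g)"
    unfolding absolutely_productive_def
  proof (intro allI impI)
    fix h :: "nat \<Rightarrow> 'a" assume h: "inj h \<and> range h \<subseteq> range g"
    then have "h = g \<circ> (inv g \<circ> h)"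
      by (simp add: fun_eq_iff f_inv_into_f image_subset_iff)
    moreover from this have "inj (inv g \<circ> h)"
      using h by (metis inj_on_imageI2)
    ultimately show "hyper_multipliable h"
      using hm by metis
  qed
qed

lemma hyper_multipliable_comp_inj_iff_comp_bij:
  fixes g :: "nat \<Rightarrow> 'a::topological_group_add"
  shows
  "(\<forall>\<sigma>. inj \<sigma> \<longrightarrow> hyper_multipliable (g \<circ> \<sigma>)) \<longleftrightarrow> (\<forall>\<sigma>. bij \<sigma> \<longrightarrow> hyper_multipliable (g \<circ> \<sigma>))"
proof (intro iffI allI impI)
  fix \<sigma> :: "nat \<Rightarrow> nat"
  assume "\<forall>\<sigma>. bij \<sigma> \<longrightarrow> hyper_multipliable (g \<circ> \<sigma>)" and "inj \<sigma>"
  then obtain \<tau> r :: "nat \<Rightarrow> nat" where "hyper_multipliable (g \<circ> \<tau>)" "strict_mono r" "\<sigma> = \<tau> \<circ> r"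
    by (metis inj_factors_through_bij)
  then show "hyper_multipliable (g \<circ> \<sigma>)"
    by (metis hyper_multipliable_comp_strict_mono comp_assoc)
qed (simp add: bij_is_inj)

definition subseries_convergent :: "(nat \<Rightarrow> 'a::topological_group_add) \<Rightarrow> bool" where
  "subseries_convergent h \<longleftrightarrow> (\<forall>W. convergent (oprod (\<lambda>k. if k \<in> W then h k else 0)))"

lemma hyper_multipliable_imp_subseries_convergent:
  assumes "hyper_multipliable g"
  shows "subseries_convergent (\<lambda>k. zmult (m k) (g k))"
proof -
  have "(\<lambda>k. if k \<in> W then zmult (m k) (g k) else 0) = (\<lambda>k. zmult (if k \<in> W then m k else 0) (g k))" for W
    by auto
  with assms show ?thesis
    by (simp add: subseries_convergent_def hyper_multipliable_def)
qed

lemma inj_initial_segment_bound: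
  fixes \<sigma> :: "nat \<Rightarrow> nat"
  assumes \<sigma>: "inj \<sigma>"
  obtains n :: "nat \<Rightarrow> nat"
  where "filterlim n at_top sequentially" and "\<And>K. {..<n K} \<inter> range \<sigma> \<subseteq> \<sigma> ` {..<K}"
proof -
  define n where "n K = (LEAST j. j \<in> \<sigma> ` {K..})" for K
  have n_in: "n K \<in> \<sigma> ` {K..}" for K
    unfolding n_def by (rule LeastI [of _ "\<sigma> K"]) auto
  have "{..<n K} \<inter> range \<sigma> \<subseteq> \<sigma> ` {..<K}" for K
  proof
    fix j assume "j \<in> {..<n K} \<inter> range \<sigma>"
    then obtain k where k: "j = \<sigma> k" "\<sigma> k < n K"
      by auto
    have "\<not> K \<le> k"
    proof
      assume "K \<le> k"
      then have "n K \<le> \<sigma> k"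
        unfolding n_def by (intro Least_le) auto
      with k show False
        by simp
    qed
    with k show "j \<in> \<sigma> ` {..<K}"
      by auto
  qed
  moreover have "filterlim n at_top sequentially"
    unfolding filterlim_at_top
  proof
    fix Z
    have "\<forall>\<^sub>F k in sequentially. Z \<le> \<sigma> k"
      using MOST_inj [of "\<lambda>x. Z \<le> x", OF _ \<sigma>] by (simp add: cofinite_eq_sequentially)
    then obtain K0 where K0: "\<And>k. K0 \<le> k \<Longrightarrow> Z \<le> \<sigma> k"
      by (auto simp: eventually_sequentially)
    have "Z \<le> n K" if "K0 \<le> K" for K
    proof -
      obtain k where "K \<le> k" "n K = \<sigma> k"
        using n_in [of K] by auto
      with K0 that show ?thesis
        by auto
    qed
    then show "\<forall>\<^sub>F K in sequentially. Z \<le> n K"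
      by (auto simp: eventually_sequentially)
  qed
  ultimately show ?thesis
    using that by blast
qed

context
  assumes add_commute: "\<And>x y :: 'a::topological_group_add. x + y = y + x"
begin

interpretation fsum: comm_monoid_set "(+)" "0 :: 'a"
  by unfold_locales (simp_all add: add.assoc add_commute)

lemma oprod_eq_fsum: "oprod f n = fsum.F f {..<n}"
  by (induction n) (simp_all add: lessThan_Suc add_commute)

lemma minus_oprod_add_oprod:
  assumes "a \<le> b"
  shows "- oprod f a + oprod f b = fsum.F f {a..<b}"
proof -
  have "oprod f b = fsum.F f ({..<a} \<union> {a..<b})"
    using assms by (simp add: oprod_eq_fsum ivl_disj_un)
  also have "\<dots> = oprod f a + fsum.F f {a..<b}"
    by (subst fsum.union_disjoint) (auto simp: oprod_eq_fsum)
  finally show ?thesis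
    by (simp add: add.assoc [symmetric])
qed

lemma subseries_convergent_tail_sums_small:
  assumes h: "subseries_convergent h" and U: "open U" "0 \<in> U"
  shows "\<exists>N. \<forall>F \<subseteq> {N..}. finite F \<longrightarrow> fsum.F h F \<in> U"
proof (rule ccontr)
  \<comment> \<open>Otherwise there are disjoint finite blocks whose sums avoid U, and the subseries
     along their union does not converge.\<close>
  assume contra: "\<not> ?thesis"
  have "\<exists>F M. F \<subseteq> {N..<M} \<and> fsum.F h F \<notin> U" for N
  proof -
    obtain F where F: "F \<subseteq> {N..}" "finite F" "fsum.F h F \<notin> U"
      using contra by blast
    obtain M where "F \<subseteq> {..<M}"
      using finite_nat_bounded [OF \<open>finite F\<close>] by blast
    with F have "F \<subseteq> {N..<M}"
      by auto
    with F show ?thesis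
      by blast
  qed
  then obtain B M where B: "\<And>N. B N \<subseteq> {N..<M N}" and B_notin: "\<And>N. fsum.F h (B N) \<notin> U"
    by metis
  have M_gt: "N < M N" for N
  proof -
    have "B N \<noteq> {}"
      using B_notin [of N] U(2) by auto
    then show ?thesis
      using B [of N] by auto
  qed
  define Ns where "Ns i = (M ^^ i) 0" for i
  have Ns_Suc: "Ns (Suc i) = M (Ns i)" for i
    by (simp add: Ns_def)
  have Ns: "strict_mono Ns"
    using M_gt by (simp add: strict_mono_Suc_iff Ns_Suc)
  define W where "W = (\<Union>i. B (Ns i))"
  have W_block: "{Ns i..<Ns (Suc i)} \<inter> W = B (Ns i)" for i
  proof
    show "B (Ns i) \<subseteq> {Ns i..<Ns (Suc i)} \<inter> W"
      using B [of "Ns i"] by (auto simp: W_def Ns_Suc)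
    show "{Ns i..<Ns (Suc i)} \<inter> W \<subseteq> B (Ns i)"
    proof
      fix k assume "k \<in> {Ns i..<Ns (Suc i)} \<inter> W"
      then obtain j where j: "k \<in> B (Ns j)" and "Ns i \<le> k" "k < Ns (Suc i)"
        by (auto simp: W_def)
      moreover have "Ns j \<le> k" "k < Ns (Suc j)"
        using j B [of "Ns j"] by (auto simp: Ns_Suc)
      ultimately have "Ns j < Ns (Suc i)" "Ns i < Ns (Suc j)"
        by linarith+
      then have "j = i"
        using Ns by (simp add: strict_mono_less)
      with j show "k \<in> B (Ns i)"
        by simp
    qed
  qed
  define hW where "hW k = (if k \<in> W then h k else 0)" for k
  have block_sum: "- oprod hW (Ns i) + oprod hW (Ns (Suc i)) = fsum.F h (B (Ns i))" for i
  proof -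
    have "Ns i \<le> Ns (Suc i)"
      using Ns by (simp add: strict_mono_less_eq)
    then have "- oprod hW (Ns i) + oprod hW (Ns (Suc i)) = fsum.F hW {Ns i..<Ns (Suc i)}"
      by (rule minus_oprod_add_oprod)
    also have "\<dots> = fsum.F h (B (Ns i))"
      by (simp add: hW_def fsum.inter_restrict [symmetric] W_block)
    finally show ?thesis .
  qed
  obtain L where "oprod hW \<longlonglongrightarrow> L"
    using h by (auto simp: subseries_convergent_def convergent_def hW_def [abs_def])
  then have "(\<lambda>i. oprod hW (Ns i)) \<longlonglongrightarrow> L"
    using LIMSEQ_subseq_LIMSEQ [OF _ Ns] by (simp add: comp_def)
  then have "(\<lambda>i. - oprod hW (Ns i) + oprod hW (Ns (Suc i))) \<longlonglongrightarrow> - L + L"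
    by (intro tendsto_add tendsto_minus LIMSEQ_Suc)
  then have "\<forall>\<^sub>F i in sequentially. fsum.F h (B (Ns i)) \<in> U"
    using U by (simp add: block_sum topological_tendstoD)
  then show False
    using B_notin by simp
qed

lemma subseries_convergent_comp_inj:
  fixes h :: "nat \<Rightarrow> 'a"
  assumes h: "subseries_convergent h" and \<sigma>: "inj \<sigma>" and zero: "\<And>j. j \<notin> range \<sigma> \<Longrightarrow> h j = 0"
  shows "convergent (oprod (h \<circ> \<sigma>))"
proof -
  obtain L where L: "oprod h \<longlonglongrightarrow> L"
    using h [unfolded subseries_convergent_def, THEN spec [of _ UNIV]] by (auto simp: convergent_def)
  obtain n where n: "filterlim n at_top sequentially"
    and seg: "\<And>K. {..<n K} \<inter> range \<sigma> \<subseteq> \<sigma> ` {..<K}"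
    using inj_initial_segment_bound [OF \<sigma>] by blast
  \<comment> \<open>Every nonzero term of h below n K is among the first K terms of the reordered
     series; R K collects those of the first K terms that lie at or beyond n K.\<close>
  define R where "R K = fsum.F h (\<sigma> ` {..<K} - {..<n K})" for K
  have decomp: "oprod (h \<circ> \<sigma>) K = oprod h (n K) + R K" for K
  proof -
    have "oprod (h \<circ> \<sigma>) K = fsum.F h (\<sigma> ` {..<K})"
      using \<sigma> by (simp add: oprod_eq_fsum fsum.reindex inj_on_subset)
    also have "\<dots> = fsum.F h (\<sigma> ` {..<K} \<inter> {..<n K}) + R K"
      unfolding R_def by (rule fsum.Int_Diff) simp
    also have "fsum.F h (\<sigma> ` {..<K} \<inter> {..<n K}) = fsum.F h {..<n K}"
    proof (rule fsum.mono_neutral_left)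
      show "\<forall>i \<in> {..<n K} - \<sigma> ` {..<K} \<inter> {..<n K}. h i = 0"
        using seg [of K] zero by blast
    qed auto
    finally show ?thesis
      by (simp add: oprod_eq_fsum)
  qed
  have "R \<longlonglongrightarrow> 0"
  proof (rule topological_tendstoI)
    fix U :: "'a set" assume "open U" "0 \<in> U"
    then obtain N where N: "\<And>F. F \<subseteq> {N..} \<Longrightarrow> finite F \<Longrightarrow> fsum.F h F \<in> U"
      using subseries_convergent_tail_sums_small [OF h] by blast
    have "\<forall>\<^sub>F K in sequentially. N \<le> n K"
      using n by (simp add: filterlim_at_top)
    then show "\<forall>\<^sub>F K in sequentially. R K \<in> U"
      by eventually_elim (auto simp: R_def intro!: N)
  qed
  then have "(\<lambda>K. oprod h (n K) + R K) \<longlonglongrightarrow> L + 0"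
    using filterlim_compose [OF L n] by (intro tendsto_add)
  then have "oprod (h \<circ> \<sigma>) \<longlonglongrightarrow> L"
    by (simp add: decomp [abs_def])
  then show ?thesis
    by (rule convergentI)
qed

lemma hyper_multipliable_comp_inj:
  fixes g :: "nat \<Rightarrow> 'a"
  assumes g: "hyper_multipliable g" and \<sigma>: "inj \<sigma>"
  shows "hyper_multipliable (g \<circ> \<sigma>)"
  unfolding hyper_multipliable_def
proof
  fix m :: "nat \<Rightarrow> int"
  define m' where "m' j = (if j \<in> range \<sigma> then m (inv \<sigma> j) else 0)" for j
  have "convergent (oprod ((\<lambda>j. zmult (m' j) (g j)) \<circ> \<sigma>))"
    using hyper_multipliable_imp_subseries_convergent [OF g] \<sigma>
    by (rule subseries_convergent_comp_inj) (simp add: m'_def)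
  moreover have "(\<lambda>j. zmult (m' j) (g j)) \<circ> \<sigma> = (\<lambda>k. zmult (m k) ((g \<circ> \<sigma>) k))"
    using \<sigma> by (auto simp: m'_def)
  ultimately show "convergent (oprod (\<lambda>k. zmult (m k) ((g \<circ> \<sigma>) k)))"
    by simp
qed

end

theorem lemma3p2:
  fixes g :: "nat \<Rightarrow> 'a::{topological_group_add, t2_space}"
    and A :: "'a set"
  assumes inj_g: "inj g"
    and A_def: "A = range g"
  defines "ap1 \<equiv> absolutely_productive A"
    and "ap2 \<equiv> (\<forall>\<sigma> :: nat \<Rightarrow> nat. inj \<sigma> \<longrightarrow> hyper_multipliable (g \<circ> \<sigma>))"
    and "ap3 \<equiv> (\<forall>\<sigma> :: nat \<Rightarrow> nat. bij \<sigma> \<longrightarrow> hyper_multipliable (g \<circ> \<sigma>))"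
    and "ap4 \<equiv> hyper_multipliable g"
  shows "((ap1 \<longleftrightarrow> ap2) \<and> (ap2 \<longleftrightarrow> ap3) \<and> (ap1 \<longrightarrow> ap4))
         \<and> ((\<forall>x y :: 'a. x + y = y + x) \<longrightarrow> (ap1 \<longleftrightarrow> ap4))"
proof -
  have ap12: "ap1 \<longleftrightarrow> ap2"
    unfolding ap1_def ap2_def A_def using inj_g by (rule absolutely_productive_range_iff)
  have ap23: "ap2 \<longleftrightarrow> ap3"
    unfolding ap2_def ap3_def by (rule hyper_multipliable_comp_inj_iff_comp_bij)
  have ap24: "ap2 \<longrightarrow> ap4"
  proof
    assume ap2
    then have "hyper_multipliable (g \<circ> id)"
      unfolding ap2_def using inj_on_id by blast
    then show ap4
      unfolding ap4_def by simp
  qed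
  have ap42: "ap4 \<longrightarrow> ap2" if comm: "\<forall>x y :: 'a. x + y = y + x"
    unfolding ap2_def ap4_def using hyper_multipliable_comp_inj [of g] comm by blast
  show ?thesis
    using ap12 ap23 ap24 ap42 by blast
qed

end
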